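(* With the notation of the context and $\lambda>0$, define for each $x$ $$S_\lambda(x):=\sum_{y=1}^C d(y,\hat y(x))\,\mathbb{I}\{y\in\mathcal{C}_\lambda(x)\},\qquad S_0(x):=\sum_{y=1}^C d(y,\hat y(x))\,\mathbb{I}\{y\in\mathcal{C}(x)\}.$$ Then $S_\lambda(x)\le S_0(x)$ for every $x$, and consequently $\mathbb{E}[S_\lambda(X)]\le\mathbb{E}[S_0(X)]$ for any random input $X$.
   Context: Classification with $C$ classes, labels in $[C]=\{1,\dots,C\}$. A classifier outputs a softmax vector $\hat\pi(x)\in\mathbb{R}^C$ and predicted class $\hat y(x)=\arg\max_i \hat\pi_i(x)$. A map $g:[C]\to[G]$ partitions the classes into $G$ groups. Define $d(y,y'):=\mathbb{I}\{g(y)\neq g(y')\}$. Given any real-valued score function $s(x,y)$ and $\lambda>0$, define the penalized score $s_\lambda(x,y):=s(x,y)+\lambda\, d(y,\hat y(x))$. Given a calibration set $\{(x_i,y_i)\}_{i=1}^n$ and $\alpha\in(0,1)$ with $\lceil (n+1)(1-\alpha)\rceil\le n$, $\hat q$ (resp. $\hat q_\lambda$) is the $\lceil (n+1)(1-\alpha)\rceil$-th smallest value of $\{s(x_i,y_i)\}_{i=1}^n$ (resp. $\{s_\lambda(x_i,y_i)\}_{i=1}^n$). Prediction sets: $\mathcal{C}(x)=\{y: s(x,y)\le\hat q\}$, $\mathcal{C}_\lambda(x)=\{y: s_\lambda(x,y)\le\hat q_\lambda\}$. *)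

theory Defs
  imports "HOL-Probability.Probability"
begin

text \<open>Classes are 1..C (natural numbers), groups 1..G, inputs of an arbitrary type.\<close>

definition dgrp :: "(nat \<Rightarrow> nat) \<Rightarrow> nat \<Rightarrow> nat \<Rightarrow> real" where
  "dgrp g y y' = (if g y \<noteq> g y' then 1 else 0)"

definition kth_smallest :: "nat \<Rightarrow> real list \<Rightarrow> real" where
  "kth_smallest k xs = sort xs ! (k - 1)"

definition qhat :: "real \<Rightarrow> nat \<Rightarrow> (nat \<Rightarrow> real) \<Rightarrow> real" where
  "qhat alpha n sc = kth_smallest (nat \<lceil>(real n + 1) * (1 - alpha)\<rceil>) (map sc [1..<n+1])"

definition pen_score :: "('x \<Rightarrow> nat \<Rightarrow> real) \<Rightarrow> real \<Rightarrow> (nat \<Rightarrow> nat) \<Rightarrow> ('x \<Rightarrow> nat)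
    \<Rightarrow> 'x \<Rightarrow> nat \<Rightarrow> real" where
  "pen_score s lam g yhat x y = s x y + lam * dgrp g y (yhat x)"

definition pred_set :: "nat \<Rightarrow> ('x \<Rightarrow> nat \<Rightarrow> real) \<Rightarrow> real \<Rightarrow> 'x \<Rightarrow> nat set" where
  "pred_set C s q x = {y \<in> {1..C}. s x y \<le> q}"

definition cross_group :: "nat \<Rightarrow> (nat \<Rightarrow> nat) \<Rightarrow> ('x \<Rightarrow> nat) \<Rightarrow> ('x \<Rightarrow> nat set) \<Rightarrow> 'x \<Rightarrow> real" where
  "cross_group C g yhat P x = (\<Sum>y=1..C. dgrp g y (yhat x) * indicator (P x) y)"

end

theory Submission
  imports Defs
begin

(* Penalizing can raise a score by at most lam, and an order statistic moves by at most the
   largest pointwise shift, so qhat_lam <= qhat + lam.  A label y outside the group of yhat x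
   has penalized score s x y + lam, hence y in C_lam x forces s x y <= qhat_lam - lam <= qhat,
   i.e. y in C x; labels inside the group contribute 0 to both sums.  Only lam >= 0 and the
   validity of the quantile index are needed; the hypotheses on pi, g and the labels are not. *)

lemma sorted_nth_le_iff_length_filter:
  fixes ys :: "'a::linorder list"
  assumes sorted: "sorted ys" and k: "k < length ys"
  shows "ys ! k \<le> t \<longleftrightarrow> k < length (filter (\<lambda>v. v \<le> t) ys)"
proof
  assume "ys ! k \<le> t"
  then have "ys ! j \<le> t" if "j \<le> k" for j
    using sorted k that by (meson order_trans sorted_nth_mono)
  then have "\<forall>v \<in> set (take (Suc k) ys). v \<le> t"
    by (auto simp: in_set_conv_nth)
  then have "Suc k = length (filter (\<lambda>v. v \<le> t) (take (Suc k) ys))"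
    using k by simp
  also have "\<dots> \<le> length (filter (\<lambda>v. v \<le> t) ys)"
    by (metis append_take_drop_id filter_append length_append le_add1)
  finally show "k < length (filter (\<lambda>v. v \<le> t) ys)" by simp
next
  assume count: "k < length (filter (\<lambda>v. v \<le> t) ys)"
  show "ys ! k \<le> t"
  proof (rule ccontr)
    assume "\<not> ys ! k \<le> t"
    then have "\<not> ys ! j \<le> t" if "k \<le> j" "j < length ys" for j
      using sorted that by (meson order_trans sorted_nth_mono)
    then have "\<forall>v \<in> set (drop k ys). \<not> v \<le> t"
      by (auto simp: in_set_conv_nth)
    then have "filter (\<lambda>v. v \<le> t) ys = filter (\<lambda>v. v \<le> t) (take k ys)"
      by (metis append_take_drop_id filter_append filter_False append_Nil2)
    moreover have "length (filter (\<lambda>v. v \<le> t) (take k ys)) \<le> k"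
      using length_filter_le[of "\<lambda>v. v \<le> t" "take k ys"] by simp
    ultimately show False
      using count by simp
  qed
qed

lemma length_filter_mono:
  assumes "\<And>x. x \<in> set xs \<Longrightarrow> P x \<Longrightarrow> Q x"
  shows "length (filter P xs) \<le> length (filter Q xs)"
  using assms by (induction xs) auto

lemma kth_smallest_le_iff:
  assumes "1 \<le> k" "k \<le> length xs"
  shows "kth_smallest k xs \<le> t \<longleftrightarrow> k \<le> length (filter (\<lambda>v. v \<le> t) xs)"
proof -
  have "kth_smallest k xs \<le> t \<longleftrightarrow> k - 1 < length (filter (\<lambda>v. v \<le> t) (sort xs))"
    unfolding kth_smallest_def using assms by (intro sorted_nth_le_iff_length_filter) simp_all
  also have "\<dots> \<longleftrightarrow> k \<le> length (filter (\<lambda>v. v \<le> t) xs)"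
    using assms by (auto simp add: filter_sort)
  finally show ?thesis .
qed

lemma kth_smallest_map_le_add:
  fixes f h :: "'i \<Rightarrow> real"
  assumes le: "\<And>i. i \<in> set L \<Longrightarrow> f i \<le> h i + c" and k: "1 \<le> k" "k \<le> length L"
  shows "kth_smallest k (map f L) \<le> kth_smallest k (map h L) + c"
proof -
  define t where "t = kth_smallest k (map h L)"
  have "k \<le> length (filter (\<lambda>v. v \<le> t) (map h L))"
    using kth_smallest_le_iff[of k "map h L" t] k by (simp add: t_def)
  also have "\<dots> \<le> length (filter (\<lambda>v. v \<le> t + c) (map f L))"
    unfolding length_filter_map by (rule length_filter_mono) (use le in fastforce)
  finally show ?thesis
    unfolding t_def using kth_smallest_le_iff[of k "map f L"] k by simp
qed

lemma qhat_le_add: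
  assumes le: "\<And>i. i \<in> {1..n} \<Longrightarrow> f i \<le> h i + c"
    and alpha: "alpha < 1" and kn: "nat \<lceil>(real n + 1) * (1 - alpha)\<rceil> \<le> n"
  shows "qhat alpha n f \<le> qhat alpha n h + c"
proof -
  have "0 < (real n + 1) * (1 - alpha)"
    using alpha by simp
  then have "1 \<le> nat \<lceil>(real n + 1) * (1 - alpha)\<rceil>"
    by linarith
  with le kn show ?thesis
    unfolding qhat_def by (intro kth_smallest_map_le_add) auto
qed

lemma cross_group_pen_score_le:
  assumes "ql \<le> q + lam"
  shows "cross_group C g yhat (pred_set C (pen_score s lam g yhat) ql) x
           \<le> cross_group C g yhat (pred_set C s q) x"
  unfolding cross_group_def
proof (rule sum_mono)
  fix y
  show "dgrp g y (yhat x) * indicator (pred_set C (pen_score s lam g yhat) ql x) y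
          \<le> dgrp g y (yhat x) * indicator (pred_set C s q x) y"
    using assms by (auto simp: dgrp_def pred_set_def pen_score_def indicator_def)
qed

lemma abs_cross_group_le: "\<bar>cross_group C g yhat P x\<bar> \<le> real C"
proof -
  have "\<bar>cross_group C g yhat P x\<bar> \<le> (\<Sum>y=1..C. \<bar>dgrp g y (yhat x) * indicator (P x) y\<bar>)"
    unfolding cross_group_def by (rule sum_abs)
  also have "\<dots> \<le> (\<Sum>y=1..C. 1)"
    by (rule sum_mono) (auto simp: dgrp_def indicator_def)
  finally show ?thesis by simp
qed

lemma integrable_cross_group:
  assumes "finite_measure M" and "(\<lambda>w. cross_group C g yhat P (X w)) \<in> borel_measurable M"
  shows "integrable M (\<lambda>w. cross_group C g yhat P (X w))"
proof -
  interpret finite_measure M by (rule assms(1))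
  show ?thesis
    by (rule integrable_const_bound[where B = "real C"]) (simp_all add: abs_cross_group_le assms(2))
qed

theorem mainTheorem3:
  fixes C G n :: nat and pi :: "'x \<Rightarrow> nat \<Rightarrow> real" and yhat :: "'x \<Rightarrow> nat"
    and g :: "nat \<Rightarrow> nat" and s :: "'x \<Rightarrow> nat \<Rightarrow> real"
    and xs :: "nat \<Rightarrow> 'x" and ys :: "nat \<Rightarrow> nat" and alpha lam :: real
    and M :: "'w measure" and N :: "'x measure" and X :: "'w \<Rightarrow> 'x"
  defines "S_lam \<equiv> cross_group C g yhat
             (pred_set C (pen_score s lam g yhat)
                (qhat alpha n (\<lambda>i. pen_score s lam g yhat (xs i) (ys i))))"
    and "S_0 \<equiv> cross_group C g yhat
             (pred_set C s (qhat alpha n (\<lambda>i. s (xs i) (ys i))))"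
  assumes softmax: "\<And>x i. i \<in> {1..C} \<Longrightarrow> pi x i \<ge> 0"
    and softmax_sum: "\<And>x. (\<Sum>i=1..C. pi x i) = 1"
    and yhat_argmax: "\<And>x. yhat x \<in> {1..C} \<and> (\<forall>i\<in>{1..C}. pi x i \<le> pi x (yhat x))"
    and groups: "g ` {1..C} \<subseteq> {1..G}"
    and labels: "\<And>i. i \<in> {1..n} \<Longrightarrow> ys i \<in> {1..C}"
    and alpha: "0 < alpha" "alpha < 1"
    and kn: "nat \<lceil>(real n + 1) * (1 - alpha)\<rceil> \<le> n"
    and lam: "lam > 0"
    and M: "prob_space M"
    and X: "X \<in> measurable M N"
    and meas: "(\<lambda>w. S_lam (X w)) \<in> borel_measurable M"
              "(\<lambda>w. S_0 (X w)) \<in> borel_measurable M"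
  shows "(\<forall>x. S_lam x \<le> S_0 x) \<and>
         (\<integral>w. S_lam (X w) \<partial>M) \<le> (\<integral>w. S_0 (X w) \<partial>M)"
proof -
  have qhat_pen: "qhat alpha n (\<lambda>i. pen_score s lam g yhat (xs i) (ys i))
          \<le> qhat alpha n (\<lambda>i. s (xs i) (ys i)) + lam"
    using lam by (intro qhat_le_add alpha kn) (simp add: pen_score_def dgrp_def)
  have pointwise: "\<forall>x. S_lam x \<le> S_0 x"
    unfolding S_lam_def S_0_def by (intro allI cross_group_pen_score_le qhat_pen)
  interpret prob_space M by (rule M)
  have "integrable M (\<lambda>w. S_lam (X w))" "integrable M (\<lambda>w. S_0 (X w))"
    using meas unfolding S_lam_def S_0_def
    by (simp_all add: integrable_cross_group finite_measure_axioms)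
  then have "(\<integral>w. S_lam (X w) \<partial>M) \<le> (\<integral>w. S_0 (X w) \<partial>M)"
    using pointwise by (intro integral_mono) auto
  with pointwise show ?thesis by simp
qed

end
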